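(* Fix $p\in(0,1)$. Consider the Markov chain $(X_t)_{t\ge0}$ on $[0,1]$ given by $X_{t+1}=\max(X_t,U_{t+1})$ if $B_{t+1}=1$ and $X_{t+1}=\min(X_t,U_{t+1})$ if $B_{t+1}=0$, where $(B_t)_{t\ge1}$ are IID Bernoulli($p$) and $(U_t)_{t\ge1}$ are IID uniform on $[0,1]$, independent of the $B$'s (this is the evolution of a single site of the fitness model). This chain has a unique stationary distribution, whose CDF $F_p$ and density $f_p$ are $$F_p(u)=\frac{(1-p)u}{(1-p)u+p(1-u)},\qquad f_p(u)=\frac{p}{1-p}\Big(\frac{F_p(u)}{u}\Big)^2=\frac{p(1-p)}{((1-2p)u^2+p)^2}.$$ *)

theory Defs
  imports "HOL-Probability.Probability"
begin

definition fitness_step :: "real \<times> bool \<times> real \<Rightarrow> real" where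
  "fitness_step = (\<lambda>(x, b, u). if b then max x u else min x u)"

definition innovation :: "real \<Rightarrow> (bool \<times> real) measure" where
  "innovation p = measure_pmf (bernoulli_pmf p) \<Otimes>\<^sub>M uniform_measure lborel {0..1}"

text \<open>mu is a stationary distribution of the chain on [0,1]: a Borel probability
  measure concentrated on [0,1] such that, if X ~ mu is independent of (B,U),
  the next state has law mu again.\<close>
definition fitness_stationary :: "real \<Rightarrow> real measure \<Rightarrow> bool" where
  "fitness_stationary p \<mu> \<longleftrightarrow>
     prob_space \<mu> \<and> sets \<mu> = sets borel \<and> emeasure \<mu> {0..1} = 1 \<and>
     distr (\<mu> \<Otimes>\<^sub>M innovation p) borel fitness_step = \<mu>"

definition F_p :: "real \<Rightarrow> real \<Rightarrow> real" where
  "F_p p u = (1 - p) * u / ((1 - p) * u + p * (1 - u))"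

definition f_p :: "real \<Rightarrow> real \<Rightarrow> real" where
  "f_p p u = p * (1 - p) / ((1 - 2 * p) * u + p) ^ 2"

end

theory Submission
  imports Defs
begin

text \<open>Conditioning on the innovation, the CDF of the next state is the affine image
  \<open>(1 - p) u + (p u + (1 - p) (1 - u)) G u\<close> of the CDF \<open>G\<close> of the current state. For
  \<open>u \<in> [0,1]\<close> the coefficient of \<open>G u\<close> is below 1, so a stationary CDF must be the unique
  fixed point \<open>F_p p u\<close> of this map, and a law on [0,1] is determined by its CDF there.
  Conversely \<open>F_p p\<close> has derivative \<open>f_p p\<close>, so the law with density \<open>f_p p\<close> has CDF
  \<open>F_p p\<close>, and one step maps it to a law with the same CDF, that is, to itself.\<close>

lemma fitness_step_measurable:
  assumes "sets M = sets borel"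
  shows "fitness_step \<in> borel_measurable (M \<Otimes>\<^sub>M innovation p)"
proof -
  have step: "fitness_step =
      (\<lambda>z. if fst (snd z) then max (fst z) (snd (snd z)) else min (fst z) (snd (snd z)))"
    by (auto simp: fitness_step_def fun_eq_iff)
  have "sets (M \<Otimes>\<^sub>M innovation p) = sets (borel \<Otimes>\<^sub>M (count_space UNIV \<Otimes>\<^sub>M borel))"
    unfolding innovation_def
    by (intro sets_pair_measure_cong refl assms) (auto simp: sets_measure_pmf_count_space)
  then show ?thesis
    unfolding step by (subst measurable_cong_sets[OF _ refl]) measurable
qed

lemma prob_space_innovation: "0 \<le> p \<Longrightarrow> p \<le> 1 \<Longrightarrow> prob_space (innovation p)"
  unfolding innovation_def
  by (intro prob_space_pair prob_space_measure_pmf prob_space_uniform_measure) auto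

lemma nn_integral_uniform_max_atMost:
  assumes "0 \<le> u" "u \<le> 1"
  shows "(\<integral>\<^sup>+v. indicator {..u} (max x v) \<partial>uniform_measure lborel {0..1::real})
    = ennreal u * indicator {..u} x"
proof -
  have "(\<integral>\<^sup>+v. indicator {..u} (max x v) \<partial>uniform_measure lborel {0..1::real})
     = (\<integral>\<^sup>+v. indicator {..u} (max x v) * indicator {0..1} v \<partial>lborel) / emeasure lborel {0..1::real}"
    by (rule nn_integral_uniform_measure) auto
  also have "(\<lambda>v. indicator {..u} (max x v) * indicator {0..1} v :: ennreal)
      = (\<lambda>v. indicator {..u} x * indicator {0..u} v)"
    using assms by (auto simp: indicator_def fun_eq_iff)
  finally show ?thesis
    using assms by (simp add: nn_integral_cmult_indicator mult.commute divide_ennreal_def)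
qed

lemma nn_integral_uniform_min_atMost:
  assumes "0 \<le> u" "u \<le> 1"
  shows "(\<integral>\<^sup>+v. indicator {..u} (min x v) \<partial>uniform_measure lborel {0..1::real})
    = ennreal u + ennreal (1 - u) * indicator {..u} x"
proof -
  have "(\<integral>\<^sup>+v. indicator {..u} (min x v) \<partial>uniform_measure lborel {0..1::real})
     = (\<integral>\<^sup>+v. indicator {..u} (min x v) * indicator {0..1} v \<partial>lborel) / emeasure lborel {0..1::real}"
    by (rule nn_integral_uniform_measure) auto
  also have "(\<lambda>v. indicator {..u} (min x v) * indicator {0..1} v :: ennreal)
      = indicator (if x \<le> u then {0..1} else {0..u})"
    using assms by (auto simp: indicator_def fun_eq_iff)
  finally show ?thesis
    using assms by (auto simp: divide_ennreal_def ennreal_plus[symmetric] simp del: ennreal_plus)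
qed

lemma nn_integral_innovation_step_atMost:
  assumes "0 \<le> u" "u \<le> 1" "0 \<le> p" "p \<le> 1"
  shows "(\<integral>\<^sup>+y. indicator {..u} (fitness_step (x, y)) \<partial>innovation p)
    = ennreal ((1 - p) * u) + ennreal (p * u + (1 - p) * (1 - u)) * indicator {..u} x"
proof -
  interpret U: prob_space "uniform_measure lborel {0..1::real}"
    by (rule prob_space_uniform_measure) auto
  have "(\<integral>\<^sup>+y. indicator {..u} (fitness_step (x, y)) \<partial>innovation p)
    = (\<integral>\<^sup>+b. \<integral>\<^sup>+v. indicator {..u} (fitness_step (x, b, v)) \<partial>uniform_measure lborel {0..1}
        \<partial>measure_pmf (bernoulli_pmf p))"
    unfolding innovation_def
    by (subst U.nn_integral_fst[symmetric]) (auto simp: fitness_step_def)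
  also have "\<dots> = ennreal p * (ennreal u * indicator {..u} x)
      + ennreal (1 - p) * (ennreal u + ennreal (1 - u) * indicator {..u} x)"
    using assms
    by (simp add: nn_integral_measure_pmf nn_integral_count_space_finite UNIV_bool fitness_step_def
        nn_integral_uniform_max_atMost nn_integral_uniform_min_atMost add.commute)
  also have "\<dots> = ennreal ((1 - p) * u) + ennreal (p * u + (1 - p) * (1 - u)) * indicator {..u} x"
  proof -
    have "0 \<le> p * u" "0 \<le> (1 - p) * u" "0 \<le> (1 - p) * (1 - u)"
      using assms by simp_all
    then show ?thesis
      using assms
      by (auto simp: indicator_def ennreal_mult[symmetric] ennreal_plus[symmetric] algebra_simps
          simp del: ennreal_plus)
  qed
  finally show ?thesis .
qed

lemma measure_distr_fitness_step_atMost: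
  assumes \<mu>: "prob_space \<mu>" "sets \<mu> = sets borel"
    and u: "0 \<le> u" "u \<le> 1" and p: "0 \<le> p" "p \<le> 1"
  shows "measure (distr (\<mu> \<Otimes>\<^sub>M innovation p) borel fitness_step) {..u}
     = (1 - p) * u + (p * u + (1 - p) * (1 - u)) * measure \<mu> {..u}"
proof -
  interpret N: prob_space "innovation p" using prob_space_innovation p .
  interpret M: prob_space \<mu> by fact
  have step: "fitness_step \<in> borel_measurable (\<mu> \<Otimes>\<^sub>M innovation p)"
    using fitness_step_measurable \<mu>(2) .
  define a where "a = p * u + (1 - p) * (1 - u)"
  define b where "b = (1 - p) * u"
  have ab: "0 \<le> a" "0 \<le> b" using u p by (simp_all add: a_def b_def)
  have "emeasure (distr (\<mu> \<Otimes>\<^sub>M innovation p) borel fitness_step) {..u}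
     = (\<integral>\<^sup>+z. indicator {..u} z \<partial>distr (\<mu> \<Otimes>\<^sub>M innovation p) borel fitness_step)"
    by (subst nn_integral_indicator) auto
  also have "\<dots> = (\<integral>\<^sup>+z. indicator {..u} (fitness_step z) \<partial>(\<mu> \<Otimes>\<^sub>M innovation p))"
    by (rule nn_integral_distr[OF step]) auto
  also have "\<dots> = (\<integral>\<^sup>+x. \<integral>\<^sup>+y. indicator {..u} (fitness_step (x, y)) \<partial>innovation p \<partial>\<mu>)"
    by (rule N.nn_integral_fst[symmetric]) (use step in measurable)
  also have "\<dots> = (\<integral>\<^sup>+x. ennreal b + ennreal a * indicator {..u} x \<partial>\<mu>)"
    using nn_integral_innovation_step_atMost[OF u p] by (simp add: a_def b_def)
  also have "\<dots> = ennreal b + ennreal a * emeasure \<mu> {..u}"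
    using \<mu>(2) by (subst nn_integral_add) (auto simp: M.emeasure_space_1 nn_integral_cmult_indicator)
  also have "\<dots> = ennreal (b + a * measure \<mu> {..u})"
    using ab by (simp add: M.emeasure_eq_measure ennreal_mult ennreal_plus)
  finally show ?thesis
    using ab by (simp add: measure_eq_emeasure_eq_ennreal a_def b_def)
qed

lemma real_distribution_eqI_cdf_interval:
  assumes M: "real_distribution M" and N: "real_distribution N"
    and eq: "\<And>u. a \<le> u \<Longrightarrow> u \<le> b \<Longrightarrow> cdf M u = cdf N u"
    and lower: "cdf N a = 0" and upper: "cdf N b = 1"
  shows "M = N"
proof (rule cdf_unique[OF M N], rule ext)
  interpret M: real_distribution M by fact
  interpret N: real_distribution N by fact
  have "a \<le> b"
  proof (rule ccontr)
    assume "\<not> a \<le> b"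
    then have "cdf N b \<le> cdf N a" by (intro N.cdf_nondecreasing) simp
    with lower upper show False by simp
  qed
  fix u
  consider "u < a" | "a \<le> u" "u \<le> b" | "b < u" by linarith
  then show "cdf M u = cdf N u"
  proof cases
    case 1
    then have "cdf M u \<le> cdf M a" "cdf N u \<le> cdf N a"
      by (simp_all add: M.cdf_nondecreasing N.cdf_nondecreasing)
    with \<open>a \<le> b\<close> show ?thesis
      using eq[of a] lower M.cdf_nonneg[of u] N.cdf_nonneg[of u] by simp
  next
    case 2
    then show ?thesis by (rule eq)
  next
    case 3
    then have "cdf M b \<le> cdf M u" "cdf N b \<le> cdf N u"
      by (simp_all add: M.cdf_nondecreasing N.cdf_nondecreasing)
    with \<open>a \<le> b\<close> show ?thesis
      using eq[of b] upper M.cdf_bounded_prob[of u] N.cdf_bounded_prob[of u] by simp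
  qed
qed

lemma F_p_denominator_pos:
  fixes p u :: real
  assumes "0 < p" "p < 1" "0 \<le> u" "u \<le> 1"
  shows "0 < (1 - p) * u + p * (1 - u)"
proof (cases "u = 0")
  case False
  with assms have "0 < (1 - p) * u" "0 \<le> p * (1 - u)" by simp_all
  then show ?thesis by linarith
qed (use assms in simp)

lemma F_p_0 [simp]: "F_p p 0 = 0"
  and F_p_1 [simp]: "p < 1 \<Longrightarrow> F_p p 1 = 1"
  by (simp_all add: F_p_def)

lemma F_p_fixed_point_iff:
  assumes "0 < p" "p < 1" "0 \<le> u" "u \<le> 1"
  shows "G = (1 - p) * u + (p * u + (1 - p) * (1 - u)) * G \<longleftrightarrow> G = F_p p u"
proof -
  have "G = (1 - p) * u + (p * u + (1 - p) * (1 - u)) * G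
      \<longleftrightarrow> G * ((1 - p) * u + p * (1 - u)) = (1 - p) * u"
    by (auto simp: algebra_simps)
  then show ?thesis
    using F_p_denominator_pos[OF assms] by (auto simp: F_p_def field_simps)
qed

lemma real_distribution_if_fitness_stationary:
  "fitness_stationary p \<mu> \<Longrightarrow> real_distribution \<mu>"
  by (simp add: fitness_stationary_def real_distribution_def real_distribution_axioms_def)

lemma fitness_stationary_cdf:
  assumes p: "0 < p" "p < 1" and "fitness_stationary p \<mu>" and u: "0 \<le> u" "u \<le> 1"
  shows "measure \<mu> {..u} = F_p p u"
proof -
  have "prob_space \<mu>" "sets \<mu> = sets borel"
    and "distr (\<mu> \<Otimes>\<^sub>M innovation p) borel fitness_step = \<mu>"
    using assms(3) by (simp_all add: fitness_stationary_def)
  then have "measure \<mu> {..u} = (1 - p) * u + (p * u + (1 - p) * (1 - u)) * measure \<mu> {..u}"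
    using measure_distr_fitness_step_atMost[OF _ _ u, of \<mu> p] p by simp
  then show ?thesis
    using F_p_fixed_point_iff[OF p u] by simp
qed

lemma fitness_stationary_unique:
  assumes "0 < p" "p < 1" and "fitness_stationary p \<mu>" "fitness_stationary p \<nu>"
  shows "\<mu> = \<nu>"
  using assms
  by (intro real_distribution_eqI_cdf_interval[where a = 0 and b = 1])
     (simp_all add: real_distribution_if_fitness_stationary cdf_def2 fitness_stationary_cdf)

lemma F_p_has_real_derivative:
  assumes p: "0 < p" "p < 1" and x: "0 \<le> x" "x \<le> 1"
  shows "(F_p p has_real_derivative f_p p x) (at x)"
proof -
  let ?d = "(1 - p) * x + p * (1 - x)"
  have "?d \<noteq> 0" using F_p_denominator_pos[OF p x] by simp
  then have "(F_p p has_real_derivative ((1 - p) * ?d - (1 - p) * x * ((1 - p) - p)) / ?d ^ 2) (at x)"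
    unfolding F_p_def[abs_def]
    by (auto intro!: derivative_eq_intros simp: power2_eq_square)
  moreover have "((1 - p) * ?d - (1 - p) * x * ((1 - p) - p)) / ?d ^ 2 = f_p p x"
    unfolding f_p_def by (simp add: algebra_simps)
  ultimately show ?thesis by simp
qed

definition fitness_law :: "real \<Rightarrow> real measure" where
  "fitness_law p = density lborel (\<lambda>u. ennreal (indicator {0..1} u * f_p p u))"

lemma sets_fitness_law [simp]: "sets (fitness_law p) = sets borel"
  by (simp add: fitness_law_def)

lemma emeasure_fitness_law_restrict:
  assumes "A \<in> sets borel"
  shows "emeasure (fitness_law p) A = emeasure (fitness_law p) (A \<inter> {0..1})"
  using assms unfolding fitness_law_def
  by (subst (1 2) emeasure_density) (auto intro!: nn_integral_cong simp: indicator_def f_p_def)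

lemma emeasure_fitness_law_atMost:
  assumes p: "0 < p" "p < 1" and u: "0 \<le> u" "u \<le> 1"
  shows "emeasure (fitness_law p) {..u} = ennreal (F_p p u)"
proof -
  have "emeasure (fitness_law p) {..u} = (\<integral>\<^sup>+x. ennreal (f_p p x) * indicator {0..u} x \<partial>lborel)"
    unfolding fitness_law_def using u
    by (subst emeasure_density) (auto intro!: nn_integral_cong simp: indicator_def f_p_def)
  also have "\<dots> = ennreal (F_p p u - F_p p 0)"
  proof (rule nn_integral_has_integral_lebesgue')
    show "0 \<le> f_p p x" for x using p by (simp add: f_p_def)
    show "(f_p p has_integral F_p p u - F_p p 0) {0..u}"
      using u F_p_has_real_derivative[OF p]
      by (intro fundamental_theorem_of_calculus)
         (auto simp: has_real_derivative_iff_has_vector_derivative[symmetric]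
           intro: has_field_derivative_at_within)
  qed
  finally show ?thesis by simp
qed

lemma fitness_law_unit_interval:
  assumes p: "0 < p" "p < 1"
  shows "emeasure (fitness_law p) {0..1} = 1" and "prob_space (fitness_law p)"
proof -
  have "emeasure (fitness_law p) {0..1} = emeasure (fitness_law p) {..1}"
    using emeasure_fitness_law_restrict[of "{..1}" p] by (simp add: Int_absorb2)
  then show one: "emeasure (fitness_law p) {0..1} = 1"
    using emeasure_fitness_law_atMost[OF p, of 1] p by simp
  have "space (fitness_law p) = UNIV"
    by (simp add: fitness_law_def)
  then show "prob_space (fitness_law p)"
    using one emeasure_fitness_law_restrict[of UNIV p] by (intro prob_spaceI) simp
qed

lemma fitness_stationary_fitness_law:
  assumes p: "0 < p" "p < 1"
  shows "fitness_stationary p (fitness_law p)"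
proof -
  interpret L: prob_space "fitness_law p" using fitness_law_unit_interval[OF p] by simp
  interpret N: prob_space "innovation p" using prob_space_innovation p by simp
  interpret P: pair_prob_space "fitness_law p" "innovation p" ..
  let ?next = "distr (fitness_law p \<Otimes>\<^sub>M innovation p) borel fitness_step"
  have cdf_law: "measure (fitness_law p) {..u} = F_p p u" if "0 \<le> u" "u \<le> 1" for u
    using emeasure_fitness_law_atMost[OF p that] F_p_denominator_pos[OF p that] that p
    by (intro measure_eq_emeasure_eq_ennreal) (auto simp: F_p_def)
  have "?next = fitness_law p"
  proof (rule real_distribution_eqI_cdf_interval[where a = 0 and b = 1])
    show "real_distribution ?next"
      by (intro P.real_distribution_distr fitness_step_measurable sets_fitness_law)
    show "real_distribution (fitness_law p)"
      by (simp add: real_distribution_def real_distribution_axioms_def L.prob_space_axioms)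
    show "cdf ?next u = cdf (fitness_law p) u" if "0 \<le> u" "u \<le> 1" for u
    proof -
      have "cdf ?next u = (1 - p) * u + (p * u + (1 - p) * (1 - u)) * F_p p u"
        using measure_distr_fitness_step_atMost[OF L.prob_space_axioms sets_fitness_law that, of p]
          cdf_law[OF that] p
        by (simp add: cdf_def2)
      also have "\<dots> = F_p p u"
        using F_p_fixed_point_iff[OF p that, of "F_p p u"] by metis
      finally show ?thesis
        using cdf_law[OF that] by (simp add: cdf_def2)
    qed
    show "cdf (fitness_law p) 0 = 0" "cdf (fitness_law p) 1 = 1"
      using cdf_law[of 0] cdf_law[of 1] p by (simp_all add: cdf_def2)
  qed
  then show ?thesis
    using fitness_law_unit_interval[OF p] L.prob_space_axioms
    by (simp add: fitness_stationary_def)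
qed

lemma f_p_eq_F_p_ratio:
  assumes p: "0 < p" "p < 1" and u: "0 < u" "u \<le> 1"
  shows "f_p p u = p / (1 - p) * (F_p p u / u) ^ 2"
proof -
  let ?d = "(1 - p) * u + p * (1 - u)"
  have "?d \<noteq> 0" using F_p_denominator_pos[OF p less_imp_le[OF u(1)] u(2)] by simp
  have "F_p p u / u = (1 - p) / ?d"
    unfolding F_p_def using u by simp
  moreover have "(1 - 2 * p) * u + p = ?d" by (simp add: algebra_simps)
  ultimately show ?thesis
    using p unfolding f_p_def by (simp add: power_divide power2_eq_square)
qed

theorem corollary2:
  fixes p :: real
  assumes "0 < p" and "p < 1"
  shows "(\<exists>!\<mu>. fitness_stationary p \<mu>) \<and>
         (\<forall>\<mu>. fitness_stationary p \<mu> \<longrightarrow>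
            (\<forall>u\<in>{0..1}. measure \<mu> {..u} = F_p p u) \<and>
            \<mu> = density lborel (\<lambda>u. ennreal (indicator {0..1} u * f_p p u)) \<and>
            (\<forall>u\<in>{0<..1}. f_p p u = p / (1 - p) * (F_p p u / u) ^ 2))"
proof -
  have law: "fitness_stationary p (fitness_law p)"
    using fitness_stationary_fitness_law assms .
  have unique: "\<mu> = fitness_law p" if "fitness_stationary p \<mu>" for \<mu>
    using fitness_stationary_unique assms that law .
  have "\<exists>!\<mu>. fitness_stationary p \<mu>"
    using law unique by blast
  then show ?thesis
    using unique fitness_stationary_cdf[OF assms] f_p_eq_F_p_ratio[OF assms]
    unfolding fitness_law_def by auto
qed

end
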